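(* Let $(E,\langle\cdot,\cdot\rangle,\rho,\circ)$ be a pre-Courant algebroid over $M$ with Jacobiator $J$. For every $f\in C^\infty(M)$ and $e_2,e_3\in\Gamma(E)$, $J(\mathcal Df,e_2,e_3)=0$.
   Context: A Courant vector bundle over a smooth manifold $M$ is a vector bundle $E\to M$ with a fibrewise nondegenerate symmetric bilinear form $\langle\cdot,\cdot\rangle$ and a bundle map $\rho:E\to TM$ such that $\rho\circ\rho^*=0$, where $\rho^*:T^*M\to E^*\cong E$ is the dual of $\rho$ followed by the identification $E^*\cong E$ via $\langle\cdot,\cdot\rangle$. A pre-Courant algebroid structure on it is an $\mathbb R$-bilinear operation $\circ$ on $\Gamma(E)$ such that for all $e_1,e_2,e_3\in\Gamma(E)$: (i) $\rho(e_1\circ e_2)=[\rho(e_1),\rho(e_2)]$; (ii) $\langle e_1\circ e_1,e_2\rangle=\frac12\rho(e_2)\langle e_1,e_1\rangle$; (iii) $\rho(e_1)\langle e_2,e_3\rangle=\langle e_1\circ e_2,e_3\rangle+\langle e_2,e_1\circ e_3\rangle$. Define $\mathcal D:C^\infty(M)\to\Gamma(E)$ by $\langle\mathcal Df,e\rangle=\rho(e)f$. The Jacobiator is $J(e_1,e_2,e_3)=e_1\circ(e_2\circ e_3)-(e_1\circ e_2)\circ e_3-e_2\circ(e_1\circ e_3)$. *)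

theory Defs
  imports Main "HOL-Analysis.Analysis"
begin

text \<open>
  Points of M form the type 'm; C is the algebra C^\<infinity>(M) of smooth functions
  (a set of real functions on 'm); S is the space \<Gamma>(E) of smooth sections of E,
  realised as maps 'm \<Rightarrow> 'e into a real vector space 'e containing all fibres;
  the fibre E_x is {e x | e \<in> S}.  Smooth vector fields on M are the derivations
  of C (normalised to be 0 outside C so that they are determined by their action on C).
\<close>

definition smooth_algebra :: "('m \<Rightarrow> real) set \<Rightarrow> bool" where
  "smooth_algebra C \<longleftrightarrow> (\<forall>c::real. (\<lambda>x. c) \<in> C) \<and>
     (\<forall>f\<in>C. \<forall>h\<in>C. (\<lambda>x. f x + h x) \<in> C \<and> (\<lambda>x. f x * h x) \<in> C)"

definition is_vector_field ::
  "('m \<Rightarrow> real) set \<Rightarrow> (('m \<Rightarrow> real) \<Rightarrow> ('m \<Rightarrow> real)) \<Rightarrow> bool" where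
  "is_vector_field C X \<longleftrightarrow>
     (\<forall>f\<in>C. X f \<in> C) \<and>
     (\<forall>f. f \<notin> C \<longrightarrow> X f = (\<lambda>x. 0)) \<and>
     (\<forall>f\<in>C. \<forall>h\<in>C. \<forall>a b::real. X (\<lambda>x. a * f x + b * h x) = (\<lambda>x. a * X f x + b * X h x)) \<and>
     (\<forall>f\<in>C. \<forall>h\<in>C. X (\<lambda>x. f x * h x) = (\<lambda>x. f x * X h x + h x * X f x))"

definition vf_comb ::
  "('m \<Rightarrow> real) set \<Rightarrow> ('m \<Rightarrow> real) \<Rightarrow> (('m \<Rightarrow> real) \<Rightarrow> ('m \<Rightarrow> real))
     \<Rightarrow> (('m \<Rightarrow> real) \<Rightarrow> ('m \<Rightarrow> real)) \<Rightarrow> (('m \<Rightarrow> real) \<Rightarrow> ('m \<Rightarrow> real))" where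
  "vf_comb C a X Y = (\<lambda>f. if f \<in> C then (\<lambda>x. a x * X f x + Y f x) else (\<lambda>x. 0))"

definition lie_bracket ::
  "('m \<Rightarrow> real) set \<Rightarrow> (('m \<Rightarrow> real) \<Rightarrow> ('m \<Rightarrow> real))
     \<Rightarrow> (('m \<Rightarrow> real) \<Rightarrow> ('m \<Rightarrow> real)) \<Rightarrow> (('m \<Rightarrow> real) \<Rightarrow> ('m \<Rightarrow> real))" where
  "lie_bracket C X Y = (\<lambda>f. if f \<in> C then (\<lambda>x. X (Y f) x - Y (X f) x) else (\<lambda>x. 0))"

definition one_form ::
  "('m \<Rightarrow> real) set \<Rightarrow> ((('m \<Rightarrow> real) \<Rightarrow> ('m \<Rightarrow> real)) \<Rightarrow> ('m \<Rightarrow> real)) \<Rightarrow> bool" where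
  "one_form C \<xi> \<longleftrightarrow>
     (\<forall>X. is_vector_field C X \<longrightarrow> \<xi> X \<in> C) \<and>
     (\<forall>a\<in>C. \<forall>X Y. is_vector_field C X \<longrightarrow> is_vector_field C Y \<longrightarrow>
        \<xi> (vf_comb C a X Y) = (\<lambda>x. a x * \<xi> X x + \<xi> Y x))"

definition pairing ::
  "('m \<Rightarrow> 'e \<Rightarrow> 'e \<Rightarrow> real) \<Rightarrow> ('m \<Rightarrow> 'e) \<Rightarrow> ('m \<Rightarrow> 'e) \<Rightarrow> ('m \<Rightarrow> real)" where
  "pairing g e1 e2 = (\<lambda>x. g x (e1 x) (e2 x))"

definition fibre :: "('m \<Rightarrow> 'e) set \<Rightarrow> 'm \<Rightarrow> 'e set" where
  "fibre S x = {e x | e. e \<in> S}"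

text \<open>\<rho>^*: T^*M \<rightarrow> E^* \<cong> E, at the level of sections: \<rho>^* \<xi> is the section s with
  <s, e> = \<xi>(\<rho> e) for all sections e.\<close>
definition anchor_dual ::
  "('m \<Rightarrow> 'e) set \<Rightarrow> ('m \<Rightarrow> 'e \<Rightarrow> 'e \<Rightarrow> real) \<Rightarrow> (('m \<Rightarrow> 'e) \<Rightarrow> (('m \<Rightarrow> real) \<Rightarrow> ('m \<Rightarrow> real)))
     \<Rightarrow> ((('m \<Rightarrow> real) \<Rightarrow> ('m \<Rightarrow> real)) \<Rightarrow> ('m \<Rightarrow> real)) \<Rightarrow> ('m \<Rightarrow> 'e)" where
  "anchor_dual S g \<rho> \<xi> = (THE s. s \<in> S \<and> (\<forall>e\<in>S. pairing g s e = \<xi> (\<rho> e)))"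

definition courant_vector_bundle ::
  "('m \<Rightarrow> real) set \<Rightarrow> ('m \<Rightarrow> 'e::real_vector) set \<Rightarrow> ('m \<Rightarrow> 'e \<Rightarrow> 'e \<Rightarrow> real)
     \<Rightarrow> (('m \<Rightarrow> 'e) \<Rightarrow> (('m \<Rightarrow> real) \<Rightarrow> ('m \<Rightarrow> real))) \<Rightarrow> bool" where
  "courant_vector_bundle C S g \<rho> \<longleftrightarrow>
     smooth_algebra C \<and>
     \<comment> \<open>sections form a C^\<infinity>(M)-module\<close>
     (\<lambda>x. 0) \<in> S \<and>
     (\<forall>e1\<in>S. \<forall>e2\<in>S. (\<lambda>x. e1 x + e2 x) \<in> S) \<and>
     (\<forall>a\<in>C. \<forall>e\<in>S. (\<lambda>x. a x *\<^sub>R e x) \<in> S) \<and>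
     \<comment> \<open>fibrewise symmetric bilinear form, nondegenerate on each fibre, smooth\<close>
     (\<forall>x. \<forall>v w. g x v w = g x w v) \<and>
     (\<forall>x. \<forall>u v w. \<forall>a b::real. g x (a *\<^sub>R u + b *\<^sub>R v) w = a * g x u w + b * g x v w) \<and>
     (\<forall>x. \<forall>v\<in>fibre S x. (\<forall>w\<in>fibre S x. g x v w = 0) \<longrightarrow> v = 0) \<and>
     (\<forall>e1\<in>S. \<forall>e2\<in>S. pairing g e1 e2 \<in> C) \<and>
     \<comment> \<open>the anchor is a bundle map E \<rightarrow> TM\<close>
     (\<forall>e\<in>S. is_vector_field C (\<rho> e)) \<and>
     (\<forall>a\<in>C. \<forall>e1\<in>S. \<forall>e2\<in>S. \<rho> (\<lambda>x. a x *\<^sub>R e1 x + e2 x) = vf_comb C a (\<rho> e1) (\<rho> e2)) \<and>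
     \<comment> \<open>\<rho>^* exists (E^* \<cong> E via the form)\<close>
     (\<forall>\<xi>. one_form C \<xi> \<longrightarrow> (\<exists>s\<in>S. \<forall>e\<in>S. pairing g s e = \<xi> (\<rho> e))) \<and>
     \<comment> \<open>\<rho> \<circ> \<rho>^* = 0\<close>
     (\<forall>\<xi>. one_form C \<xi> \<longrightarrow> (\<forall>f\<in>C. \<rho> (anchor_dual S g \<rho> \<xi>) f = (\<lambda>x. 0)))"

definition pre_courant_algebroid ::
  "('m \<Rightarrow> real) set \<Rightarrow> ('m \<Rightarrow> 'e::real_vector) set \<Rightarrow> ('m \<Rightarrow> 'e \<Rightarrow> 'e \<Rightarrow> real)
     \<Rightarrow> (('m \<Rightarrow> 'e) \<Rightarrow> (('m \<Rightarrow> real) \<Rightarrow> ('m \<Rightarrow> real)))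
     \<Rightarrow> (('m \<Rightarrow> 'e) \<Rightarrow> ('m \<Rightarrow> 'e) \<Rightarrow> ('m \<Rightarrow> 'e)) \<Rightarrow> bool" where
  "pre_courant_algebroid C S g \<rho> circ \<longleftrightarrow>
     courant_vector_bundle C S g \<rho> \<and>
     (\<forall>e1\<in>S. \<forall>e2\<in>S. circ e1 e2 \<in> S) \<and>
     \<comment> \<open>\<real>-bilinearity\<close>
     (\<forall>e1\<in>S. \<forall>e2\<in>S. \<forall>e3\<in>S. \<forall>a b::real.
        circ (\<lambda>x. a *\<^sub>R e1 x + b *\<^sub>R e2 x) e3 = (\<lambda>x. a *\<^sub>R circ e1 e3 x + b *\<^sub>R circ e2 e3 x) \<and>
        circ e3 (\<lambda>x. a *\<^sub>R e1 x + b *\<^sub>R e2 x) = (\<lambda>x. a *\<^sub>R circ e3 e1 x + b *\<^sub>R circ e3 e2 x)) \<and>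
     \<comment> \<open>(i)\<close>
     (\<forall>e1\<in>S. \<forall>e2\<in>S. \<rho> (circ e1 e2) = lie_bracket C (\<rho> e1) (\<rho> e2)) \<and>
     \<comment> \<open>(ii)\<close>
     (\<forall>e1\<in>S. \<forall>e2\<in>S. pairing g (circ e1 e1) e2 = (\<lambda>x. (1/2) * \<rho> e2 (pairing g e1 e1) x)) \<and>
     \<comment> \<open>(iii)\<close>
     (\<forall>e1\<in>S. \<forall>e2\<in>S. \<forall>e3\<in>S.
        \<rho> e1 (pairing g e2 e3) = (\<lambda>x. pairing g (circ e1 e2) e3 x + pairing g e2 (circ e1 e3) x))"

definition Dop ::
  "('m \<Rightarrow> 'e) set \<Rightarrow> ('m \<Rightarrow> 'e \<Rightarrow> 'e \<Rightarrow> real) \<Rightarrow> (('m \<Rightarrow> 'e) \<Rightarrow> (('m \<Rightarrow> real) \<Rightarrow> ('m \<Rightarrow> real)))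
     \<Rightarrow> ('m \<Rightarrow> real) \<Rightarrow> ('m \<Rightarrow> 'e)" where
  "Dop S g \<rho> f = (THE s. s \<in> S \<and> (\<forall>e\<in>S. pairing g s e = \<rho> e f))"

definition jacobiator ::
  "(('m \<Rightarrow> 'e::real_vector) \<Rightarrow> ('m \<Rightarrow> 'e) \<Rightarrow> ('m \<Rightarrow> 'e)) \<Rightarrow> ('m \<Rightarrow> 'e) \<Rightarrow> ('m \<Rightarrow> 'e) \<Rightarrow> ('m \<Rightarrow> 'e) \<Rightarrow> ('m \<Rightarrow> 'e)" where
  "jacobiator circ e1 e2 e3 =
     (\<lambda>x. circ e1 (circ e2 e3) x - circ (circ e1 e2) e3 x - circ e2 (circ e1 e3) x)"

end

theory Submission
  imports Defs
begin

text \<open>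
  The key fact is that \<D>f \<circ> e = 0 for every section e.  Polarising axiom (ii) gives
  <\<D>f \<circ> e, e'> = \<rho>(e')<\<D>f, e> - <e \<circ> \<D>f, e'>, and by (iii) and (i)
  <e \<circ> \<D>f, e'> = \<rho>(e)\<rho>(e')f - \<rho>(e \<circ> e')f = \<rho>(e')\<rho>(e)f = \<rho>(e')<\<D>f, e>;
  nondegeneracy then forces \<D>f \<circ> e = 0.  Every term of J(\<D>f, e2, e3) has \<D>f
  or 0 as an argument of \<circ>, so the Jacobiator vanishes.
\<close>

lemma vector_field_add:
  assumes "is_vector_field C X" "f \<in> C" "h \<in> C"
  shows "X (\<lambda>x. f x + h x) = (\<lambda>x. X f x + X h x)"
proof -
  have "X (\<lambda>x. 1 * f x + 1 * h x) = (\<lambda>x. 1 * X f x + 1 * X h x)"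
    using assms unfolding is_vector_field_def by blast
  then show ?thesis by simp
qed

lemma courant_vector_bundleD:
  assumes "courant_vector_bundle C S g \<rho>"
  shows smooth_constant: "\<And>c. (\<lambda>x. c) \<in> C"
    and sections_zero: "(\<lambda>x. 0) \<in> S"
    and sections_add: "\<And>a b. a \<in> S \<Longrightarrow> b \<in> S \<Longrightarrow> (\<lambda>x. a x + b x) \<in> S"
    and sections_smult: "\<And>a e. a \<in> C \<Longrightarrow> e \<in> S \<Longrightarrow> (\<lambda>x. a x *\<^sub>R e x) \<in> S"
    and form_linear: "\<And>x u v w r t. g x (r *\<^sub>R u + t *\<^sub>R v) w = r * g x u w + t * g x v w"
    and form_sym: "\<And>x v w. g x v w = g x w v"
    and form_nondegenerate:
      "\<And>x v. v \<in> fibre S x \<Longrightarrow> (\<And>w. w \<in> fibre S x \<Longrightarrow> g x v w = 0) \<Longrightarrow> v = 0"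
    and pairing_smooth: "\<And>a b. a \<in> S \<Longrightarrow> b \<in> S \<Longrightarrow> pairing g a b \<in> C"
    and anchor_vector_field: "\<And>e. e \<in> S \<Longrightarrow> is_vector_field C (\<rho> e)"
    and anchor_dual_exists: "\<And>\<xi>. one_form C \<xi> \<Longrightarrow> \<exists>s\<in>S. \<forall>e\<in>S. pairing g s e = \<xi> (\<rho> e)"
  using assms unfolding courant_vector_bundle_def smooth_algebra_def by auto

lemma pre_courant_algebroidD:
  assumes "pre_courant_algebroid C S g \<rho> circ"
  shows pre_courant_vector_bundle: "courant_vector_bundle C S g \<rho>"
    and circ_in_sections: "\<And>a b. a \<in> S \<Longrightarrow> b \<in> S \<Longrightarrow> circ a b \<in> S"
    and circ_linear_left: "\<And>a b e r t. a \<in> S \<Longrightarrow> b \<in> S \<Longrightarrow> e \<in> S \<Longrightarrow>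
      circ (\<lambda>x. r *\<^sub>R a x + t *\<^sub>R b x) e = (\<lambda>x. r *\<^sub>R circ a e x + t *\<^sub>R circ b e x)"
    and circ_linear_right: "\<And>a b e r t. a \<in> S \<Longrightarrow> b \<in> S \<Longrightarrow> e \<in> S \<Longrightarrow>
      circ e (\<lambda>x. r *\<^sub>R a x + t *\<^sub>R b x) = (\<lambda>x. r *\<^sub>R circ e a x + t *\<^sub>R circ e b x)"
    and anchor_circ: "\<And>a b. a \<in> S \<Longrightarrow> b \<in> S \<Longrightarrow> \<rho> (circ a b) = lie_bracket C (\<rho> a) (\<rho> b)"
    and pairing_circ_self: "\<And>a c x. a \<in> S \<Longrightarrow> c \<in> S \<Longrightarrow>
      pairing g (circ a a) c x = 1/2 * \<rho> c (pairing g a a) x"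
    and anchor_pairing: "\<And>a b c x. a \<in> S \<Longrightarrow> b \<in> S \<Longrightarrow> c \<in> S \<Longrightarrow>
      \<rho> a (pairing g b c) x = pairing g (circ a b) c x + pairing g b (circ a c) x"
  using assms unfolding pre_courant_algebroid_def by auto

context
  fixes C :: "('m \<Rightarrow> real) set"
    and S :: "('m \<Rightarrow> 'e::real_vector) set"
    and g :: "'m \<Rightarrow> 'e \<Rightarrow> 'e \<Rightarrow> real"
    and \<rho> :: "('m \<Rightarrow> 'e) \<Rightarrow> (('m \<Rightarrow> real) \<Rightarrow> ('m \<Rightarrow> real))"
  assumes cvb: "courant_vector_bundle C S g \<rho>"
begin

lemma pairing_sym: "pairing g a b = pairing g b a"
  unfolding pairing_def by (rule ext, rule form_sym[OF cvb])

lemma pairing_add_left: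
  "pairing g (\<lambda>x. a x + b x) c = (\<lambda>x. pairing g a c x + pairing g b c x)"
  unfolding pairing_def using form_linear[OF cvb, of _ 1 _ 1] by simp

lemma pairing_add_right:
  "pairing g c (\<lambda>x. a x + b x) = (\<lambda>x. pairing g c a x + pairing g c b x)"
  by (subst (1 2 3) pairing_sym) (rule pairing_add_left)

lemma pairing_diff_left:
  "pairing g (\<lambda>x. a x - b x) c = (\<lambda>x. pairing g a c x - pairing g b c x)"
  unfolding pairing_def using form_linear[OF cvb, of _ 1 _ "-1"] by simp

lemma pairing_zero_left: "pairing g (\<lambda>x. 0) c = (\<lambda>x. 0)"
  using pairing_diff_left[of "\<lambda>x. 0" "\<lambda>x. 0" c] by simp

lemma sections_diff:
  assumes "s \<in> S" "t \<in> S"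
  shows "(\<lambda>x. s x - t x) \<in> S"
proof -
  have "(\<lambda>x. (-1) *\<^sub>R t x) \<in> S"
    using sections_smult[OF cvb smooth_constant[OF cvb] \<open>t \<in> S\<close>] .
  from sections_add[OF cvb \<open>s \<in> S\<close> this] show ?thesis by simp
qed

lemma section_eqI:
  assumes "s \<in> S" "t \<in> S" and pairing_eq: "\<And>e. e \<in> S \<Longrightarrow> pairing g s e = pairing g t e"
  shows "s = t"
proof
  fix x
  have "s x - t x \<in> fibre S x"
    using sections_diff[OF assms(1,2)] unfolding fibre_def
    by (intro CollectI exI[of _ "\<lambda>x. s x - t x"]) simp
  moreover have "g x (s x - t x) w = 0" if "w \<in> fibre S x" for w
  proof -
    obtain e where "e \<in> S" "w = e x"
      using \<open>w \<in> fibre S x\<close> unfolding fibre_def by blast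
    then show ?thesis
      using fun_cong[OF pairing_diff_left, of s t e x] fun_cong[OF pairing_eq, of e x]
      unfolding pairing_def by simp
  qed
  ultimately have "s x - t x = 0"
    by (rule form_nondegenerate[OF cvb])
  then show "s x = t x" by simp
qed

lemma Dop_characterization:
  assumes "f \<in> C"
  shows "Dop S g \<rho> f \<in> S \<and> (\<forall>e\<in>S. pairing g (Dop S g \<rho> f) e = \<rho> e f)"
proof -
  have "one_form C (\<lambda>X. X f)"
    using assms unfolding one_form_def vf_comb_def is_vector_field_def by auto
  then obtain d where "d \<in> S" "\<forall>e\<in>S. pairing g d e = \<rho> e f"
    using anchor_dual_exists[OF cvb] by blast
  then have "\<exists>!d. d \<in> S \<and> (\<forall>e\<in>S. pairing g d e = \<rho> e f)"
    by (intro ex1I[of _ d]) (auto intro!: section_eqI)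
  then show ?thesis
    unfolding Dop_def by (rule theI')
qed

lemma Dop_in_sections: "f \<in> C \<Longrightarrow> Dop S g \<rho> f \<in> S"
  using Dop_characterization by blast

lemma pairing_Dop: "f \<in> C \<Longrightarrow> e \<in> S \<Longrightarrow> pairing g (Dop S g \<rho> f) e = \<rho> e f"
  using Dop_characterization by blast

end

context
  fixes C :: "('m \<Rightarrow> real) set"
    and S :: "('m \<Rightarrow> 'e::real_vector) set"
    and g :: "'m \<Rightarrow> 'e \<Rightarrow> 'e \<Rightarrow> real"
    and \<rho> :: "('m \<Rightarrow> 'e) \<Rightarrow> (('m \<Rightarrow> real) \<Rightarrow> ('m \<Rightarrow> real))"
    and circ :: "('m \<Rightarrow> 'e) \<Rightarrow> ('m \<Rightarrow> 'e) \<Rightarrow> ('m \<Rightarrow> 'e)"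
  assumes pca: "pre_courant_algebroid C S g \<rho> circ"
begin

lemma circ_add_left:
  "a \<in> S \<Longrightarrow> b \<in> S \<Longrightarrow> e \<in> S \<Longrightarrow> circ (\<lambda>x. a x + b x) e = (\<lambda>x. circ a e x + circ b e x)"
  using circ_linear_left[OF pca, of a b e 1 1] by simp

lemma circ_add_right:
  "a \<in> S \<Longrightarrow> b \<in> S \<Longrightarrow> e \<in> S \<Longrightarrow> circ e (\<lambda>x. a x + b x) = (\<lambda>x. circ e a x + circ e b x)"
  using circ_linear_right[OF pca, of a b e 1 1] by simp

lemma circ_zero_left: "e \<in> S \<Longrightarrow> circ (\<lambda>x. 0) e = (\<lambda>x. 0)"
  using circ_linear_left[OF pca, of e e e 0 0] by simp

lemma circ_zero_right: "e \<in> S \<Longrightarrow> circ e (\<lambda>x. 0) = (\<lambda>x. 0)"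
  using circ_linear_right[OF pca, of e e e 0 0] by simp

lemma pairing_circ_symmetrized:
  assumes a: "a \<in> S" and b: "b \<in> S" and c: "c \<in> S"
  shows "pairing g (circ a b) c x + pairing g (circ b a) c x = \<rho> c (pairing g a b) x"
proof -
  note cvb = pre_courant_vector_bundle[OF pca]
  define s where "s = (\<lambda>x. a x + b x)"
  have s: "s \<in> S"
    unfolding s_def using sections_add[OF cvb a b] .
  have "circ s s = (\<lambda>x. circ a a x + circ a b x + (circ b a x + circ b b x))"
    using circ_add_left[OF a b s, folded s_def]
      circ_add_right[OF a b a, folded s_def] circ_add_right[OF a b b, folded s_def]
    by simp
  then have "pairing g (circ s s) c x = pairing g (circ a a) c x + pairing g (circ a b) c x
      + (pairing g (circ b a) c x + pairing g (circ b b) c x)"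
    by (simp add: pairing_add_left[OF cvb])
  moreover have "\<rho> c (pairing g s s) x
      = \<rho> c (pairing g a a) x + \<rho> c (pairing g a b) x + (\<rho> c (pairing g a b) x + \<rho> c (pairing g b b) x)"
  proof -
    have V: "is_vector_field C (\<rho> c)"
      using anchor_vector_field[OF cvb c] .
    have "\<rho> c (pairing g s s) x = \<rho> c (pairing g a s) x + \<rho> c (pairing g b s) x"
      unfolding pairing_add_left[OF cvb, of a b s, folded s_def]
      by (simp add: vector_field_add[OF V pairing_smooth[OF cvb a s] pairing_smooth[OF cvb b s]])
    moreover have "\<rho> c (pairing g a s) x = \<rho> c (pairing g a a) x + \<rho> c (pairing g a b) x"
      unfolding pairing_add_right[OF cvb, of a a b, folded s_def]
      by (simp add: vector_field_add[OF V pairing_smooth[OF cvb a a] pairing_smooth[OF cvb a b]])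
    moreover have "\<rho> c (pairing g b s) x = \<rho> c (pairing g a b) x + \<rho> c (pairing g b b) x"
      unfolding pairing_add_right[OF cvb, of b a b, folded s_def] pairing_sym[OF cvb, of b a]
      by (simp add: vector_field_add[OF V pairing_smooth[OF cvb a b] pairing_smooth[OF cvb b b]])
    ultimately show ?thesis by simp
  qed
  ultimately show ?thesis
    using pairing_circ_self[OF pca s c, of x] pairing_circ_self[OF pca a c, of x]
      pairing_circ_self[OF pca b c, of x]
    by linarith
qed

lemma circ_Dop_left:
  assumes f: "f \<in> C" and e: "e \<in> S"
  shows "circ (Dop S g \<rho> f) e = (\<lambda>x. 0)"
proof -
  note cvb = pre_courant_vector_bundle[OF pca]
  define d where "d = Dop S g \<rho> f"
  have d: "d \<in> S"
    unfolding d_def using Dop_in_sections[OF cvb f] .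
  have pairing_d: "pairing g d e' = \<rho> e' f" if "e' \<in> S" for e'
    unfolding d_def using pairing_Dop[OF cvb f that] .
  have "pairing g (circ d e) e' x = 0" if e': "e' \<in> S" for e' x
  proof -
    have "pairing g (circ e d) e' x = \<rho> e (\<rho> e' f) x - \<rho> (circ e e') f x"
      using anchor_pairing[OF pca e d e', of x] pairing_d[OF e']
        pairing_d[OF circ_in_sections[OF pca e e']]
      by simp
    also have "\<dots> = \<rho> e' (\<rho> e f) x"
      using anchor_circ[OF pca e e'] f unfolding lie_bracket_def by simp
    finally show ?thesis
      using pairing_circ_symmetrized[OF d e e', of x] pairing_d[OF e] by simp
  qed
  then show ?thesis
    unfolding d_def[symmetric]
    by (intro section_eqI[OF cvb] circ_in_sections[OF pca d e] sections_zero[OF cvb])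
      (simp add: pairing_zero_left[OF cvb] fun_eq_iff)
qed

end

theorem lemma3p7:
  fixes C :: "('m \<Rightarrow> real) set"
    and S :: "('m \<Rightarrow> 'e::real_vector) set"
    and g :: "'m \<Rightarrow> 'e \<Rightarrow> 'e \<Rightarrow> real"
    and \<rho> :: "('m \<Rightarrow> 'e) \<Rightarrow> (('m \<Rightarrow> real) \<Rightarrow> ('m \<Rightarrow> real))"
    and circ :: "('m \<Rightarrow> 'e) \<Rightarrow> ('m \<Rightarrow> 'e) \<Rightarrow> ('m \<Rightarrow> 'e)"
  assumes "pre_courant_algebroid C S g \<rho> circ"
    and "f \<in> C" and "e2 \<in> S" and "e3 \<in> S"
  shows "jacobiator circ (Dop S g \<rho> f) e2 e3 = (\<lambda>x. 0)"
proof -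
  note Dop_circ_zero = circ_Dop_left[OF assms(1,2)]
  have "circ (Dop S g \<rho> f) (circ e2 e3) = (\<lambda>x. 0)"
    using Dop_circ_zero circ_in_sections[OF assms(1,3,4)] .
  moreover have "circ (circ (Dop S g \<rho> f) e2) e3 = (\<lambda>x. 0)"
    using Dop_circ_zero[OF assms(3)] circ_zero_left[OF assms(1,4)] by simp
  moreover have "circ e2 (circ (Dop S g \<rho> f) e3) = (\<lambda>x. 0)"
    using Dop_circ_zero[OF assms(4)] circ_zero_right[OF assms(1,3)] by simp
  ultimately show ?thesis
    unfolding jacobiator_def by simp
qed

end
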